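(* Let $\mathscr{A}=\{A_1,\ldots,A_r\}$ be an irreducible set of real $d\times d$ matrices, $\|\cdot\|$ a norm on $\mathbb{R}^d$, $p\ge d-1$ and $n\ge1$ integers, and $\mu>1$. Suppose that for some $A_{i_1},\ldots,A_{i_n}\in\mathscr{A}$ and some nonzero $x_*\in\mathbb{R}^d$, \[ \|A_{i_n}\cdots A_{i_1}x_*\|\ge \mu\,\eta_p(\mathscr{A})\,\rho(\mathscr{A})^n\,\|x_*\|,\qquad \eta_p(\mathscr{A})=\frac{\max\{1,\rho(\mathscr{A})^p\}}{\chi_p(\mathscr{A})}. \] Then for every nonzero $x\in\mathbb{R}^d$ there is $F_x\in\mathscr{A}_\infty$ with $n\le \mathrm{len}(F_x)\le n+p$ and \[ \|F_x x\|\ge \big(\eta\,\rho(\mathscr{A})\big)^{\mathrm{len}(F_x)}\|x\|,\qquad\text{where }\eta=\mu^{1/(n+p)}>1. \]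
   Context: Irreducible: the matrices in $\mathscr{A}$ have no common invariant subspace other than $\{0\}$ and $\mathbb{R}^d$. $\mathscr{A}^k$ is the set of products of $k$ matrices from $\mathscr{A}$, $\mathscr{A}^0=\{I\}$; matrices carry the induced operator norm, $\|\mathscr{A}^n\|=\max_{A\in\mathscr{A}^n}\|A\|$, and $\rho(\mathscr{A})=\limsup_{n\to\infty}\|\mathscr{A}^n\|^{1/n}$ is the joint spectral radius. $\mathscr{A}_\infty=\bigcup_{k\ge1}\mathscr{A}^k$, elements regarded as products of factors from $\mathscr{A}$ whose number of factors is the length $\mathrm{len}$. $\mathscr{A}_p=\bigcup_{k=0}^p\mathscr{A}^k$, $\mathscr{A}_p(x)=\{Ax:A\in\mathscr{A}_p\}$, $\mathbf{S}(t)$ the closed $\|\cdot\|$-ball of radius $t$ about $0$, and $\chi_p(\mathscr{A})=\inf_{\|x\|=1}\sup\{t\ge0:\mathbf{S}(t)\subseteq\mathrm{conv}(\mathscr{A}_p(x)\cup\mathscr{A}_p(-x))\}$ is the $p$-measure of irreducibility. *)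

theory Defs
  imports "HOL-Analysis.Analysis"
begin

definition is_norm :: "(real^'n \<Rightarrow> real) \<Rightarrow> bool" where
  "is_norm N \<longleftrightarrow> (\<forall>x. N x = 0 \<longleftrightarrow> x = 0) \<and>
     (\<forall>c x. N (c *\<^sub>R x) = \<bar>c\<bar> * N x) \<and>
     (\<forall>x y. N (x + y) \<le> N x + N y)"

definition opnorm :: "(real^'n \<Rightarrow> real) \<Rightarrow> real^'n^'n \<Rightarrow> real" where
  "opnorm N A = (SUP x\<in>{x. N x = 1}. N (A *v x))"

definition irreducible_set :: "(real^'n^'n) set \<Rightarrow> bool" where
  "irreducible_set \<A> \<longleftrightarrow>
     (\<forall>V. subspace V \<and> (\<forall>A\<in>\<A>. (\<lambda>x. A *v x) ` V \<subseteq> V) \<longrightarrow> V = {0} \<or> V = UNIV)"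

text \<open>Product of a word of matrices: matprod [A_k, ..., A_1] = A_k ** ... ** A_1.
  The length of the list is the length of the product.\<close>
fun matprod :: "(real^'n^'n) list \<Rightarrow> real^'n^'n" where
  "matprod [] = mat 1"
| "matprod (A # ws) = A ** matprod ws"

definition prods :: "(real^'n^'n) set \<Rightarrow> nat \<Rightarrow> (real^'n^'n) set" where
  "prods \<A> k = {matprod ws | ws. set ws \<subseteq> \<A> \<and> length ws = k}"

definition setnorm :: "(real^'n \<Rightarrow> real) \<Rightarrow> (real^'n^'n) set \<Rightarrow> nat \<Rightarrow> real" where
  "setnorm N \<A> k = Max (opnorm N ` prods \<A> k)"

definition jsr :: "(real^'n \<Rightarrow> real) \<Rightarrow> (real^'n^'n) set \<Rightarrow> real" where
  "jsr N \<A> = real_of_ereal (limsup (\<lambda>n. ereal (root n (setnorm N \<A> n))))"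

definition orbit_p :: "(real^'n^'n) set \<Rightarrow> nat \<Rightarrow> real^'n \<Rightarrow> (real^'n) set" where
  "orbit_p \<A> p x = {A *v x | A. \<exists>k\<le>p. A \<in> prods \<A> k}"

definition chi :: "(real^'n \<Rightarrow> real) \<Rightarrow> (real^'n^'n) set \<Rightarrow> nat \<Rightarrow> real" where
  "chi N \<A> p = (INF x\<in>{x. N x = 1}.
      Sup {t. t \<ge> 0 \<and> {y. N y \<le> t} \<subseteq> convex hull (orbit_p \<A> p x \<union> orbit_p \<A> p (- x))})"

definition eta_p :: "(real^'n \<Rightarrow> real) \<Rightarrow> (real^'n^'n) set \<Rightarrow> nat \<Rightarrow> real" where
  "eta_p N \<A> p = max 1 (jsr N \<A> ^ p) / chi N \<A> p"

end

theory Submission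
  imports Defs "HOL-Real_Asymp.Real_Asymp"
begin

text \<open>
  Fix a nonzero x and rescale it to N x = 1.  For p \<ge> d - 1 irreducibility
  makes the orbit A_p(x) span the whole space; by compactness this happens uniformly
  in x, so every symmetric hull H(x) = conv (A_p(x) \<union> A_p(-x)) contains an N-ball of a
  uniform radius.  Hence \<chi>_p(A) > 0, and (since H(x) is closed) H(x) even contains the
  closed N-ball of radius \<chi>_p(A) itself.  That ball contains a rescaled copy v of the
  vector x_* of the hypothesis, with N v = \<chi>_p(A).  The function z \<mapsto> N (P z), P the given
  product of length n, is convex, so on the polytope H(x) it is maximal at a vertex G x
  with G \<in> A^0 \<union> ... \<union> A^p.  Then F = P G has length between n and n + p and grows at
  least by the factor \<mu> max(1, \<rho>^p) \<rho>^n, which dominates (\<mu>^(1/(n+p)) \<rho>)^len(F).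
\<close>

lemma is_norm_eq_0: "is_norm N \<Longrightarrow> N x = 0 \<longleftrightarrow> x = 0"
  unfolding is_norm_def by blast

lemma is_norm_scaleR: "is_norm N \<Longrightarrow> N (c *\<^sub>R x) = \<bar>c\<bar> * N x"
  unfolding is_norm_def by blast

lemma is_norm_triangle: "is_norm N \<Longrightarrow> N (x + y) \<le> N x + N y"
  unfolding is_norm_def by blast

lemma is_norm_minus: "is_norm N \<Longrightarrow> N (- x) = N x"
  using is_norm_scaleR[of N "-1" x] by simp

lemma is_norm_nonneg: "is_norm N \<Longrightarrow> 0 \<le> N x"
  using is_norm_triangle[of N x "- x"] is_norm_minus[of N x] is_norm_eq_0[of N 0] by simp

lemma is_norm_pos: "is_norm N \<Longrightarrow> x \<noteq> 0 \<Longrightarrow> 0 < N x"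
  using is_norm_nonneg[of N x] is_norm_eq_0[of N x] by linarith

lemma is_norm_normalize: "is_norm N \<Longrightarrow> x \<noteq> 0 \<Longrightarrow> N ((1 / N x) *\<^sub>R x) = 1"
  using is_norm_pos[of N x] is_norm_scaleR[of N "1 / N x" x] by simp

lemma is_norm_convex:
  assumes nrm: "is_norm N"
  shows "convex_on UNIV N"
proof (rule convex_onI)
  fix t :: real and x y assume t: "0 < t" "t < 1"
  have "N ((1 - t) *\<^sub>R x + t *\<^sub>R y) \<le> N ((1 - t) *\<^sub>R x) + N (t *\<^sub>R y)"
    by (rule is_norm_triangle[OF nrm])
  also have "\<dots> = (1 - t) * N x + t * N y" using is_norm_scaleR[OF nrm] t by simp
  finally show "N ((1 - t) *\<^sub>R x + t *\<^sub>R y) \<le> (1 - t) * N x + t * N y" .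
qed simp

lemma is_norm_continuous: "is_norm N \<Longrightarrow> continuous_on S N"
  using convex_on_continuous[OF open_UNIV is_norm_convex] continuous_on_subset by blast

lemma is_norm_lower_bound:
  fixes N :: "real^'n \<Rightarrow> real"
  assumes nrm: "is_norm N"
  obtains m where "m > 0" "\<And>x. m * norm x \<le> N x"
proof -
  obtain w :: "real^'n" where "norm w = 1" using vector_choose_size[of 1] by auto
  then have "sphere (0::real^'n) 1 \<noteq> {}" by auto
  then obtain z where z: "z \<in> sphere 0 1" and zmin: "\<And>y. y \<in> sphere 0 1 \<Longrightarrow> N z \<le> N y"
    using continuous_attains_inf[OF compact_sphere _ is_norm_continuous[OF nrm]] by blast
  show thesis
  proof (rule that)
    show "N z > 0" using z by (intro is_norm_pos[OF nrm]) auto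
    show "N z * norm x \<le> N x" for x
    proof (cases "x = 0")
      case False
      have "N z \<le> N ((1 / norm x) *\<^sub>R x)" using zmin False by simp
      also have "\<dots> = N x / norm x" using is_norm_scaleR[OF nrm] by simp
      finally show ?thesis using False by (simp add: field_simps)
    qed (use is_norm_nonneg[OF nrm] in simp)
  qed
qed

lemma is_norm_unit_sphere_compact:
  fixes N :: "real^'n \<Rightarrow> real"
  assumes nrm: "is_norm N"
  shows "compact {x. N x = 1}"
proof -
  obtain m where m: "m > 0" "\<And>x. m * norm x \<le> N x" using is_norm_lower_bound[OF nrm] by blast
  have "{x::real^'n. N x = 1} \<subseteq> cball 0 (1 / m)"
  proof
    fix x :: "real^'n" assume "x \<in> {x. N x = 1}"
    then have "m * norm x \<le> 1" using m(2)[of x] by simp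
    then show "x \<in> cball 0 (1 / m)" using m(1) by (simp add: field_simps mult.commute)
  qed
  then have "bounded {x::real^'n. N x = 1}" using bounded_subset by blast
  moreover have "closed {x::real^'n. N x = 1}"
    using continuous_closed_preimage_constant[OF is_norm_continuous[OF nrm] closed_UNIV] by simp
  ultimately show ?thesis using compact_eq_bounded_closed by blast
qed

lemma is_norm_unit_sphere_nonempty:
  fixes N :: "real^'n \<Rightarrow> real"
  assumes "is_norm N"
  shows "{x. N x = 1} \<noteq> {}"
proof -
  obtain w :: "real^'n" where "norm w = 1" using vector_choose_size[of 1] by auto
  then have "w \<noteq> 0" by auto
  then show ?thesis using is_norm_normalize[OF assms, of w] by auto
qed

lemma opnorm_nonneg:
  fixes N :: "real^'n \<Rightarrow> real"
  assumes nrm: "is_norm N"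
  shows "0 \<le> opnorm N A"
proof -
  obtain w where w: "N w = 1" using is_norm_unit_sphere_nonempty[OF nrm] by blast
  have "compact (N ` (\<lambda>x. A *v x) ` {x. N x = 1})"
    by (intro compact_continuous_image is_norm_continuous[OF nrm] is_norm_unit_sphere_compact[OF nrm])
       (intro continuous_intros)
  then have "bdd_above (N ` (\<lambda>x. A *v x) ` {x. N x = 1})"
    by (simp add: bounded_imp_bdd_above compact_imp_bounded)
  then have "N (A *v w) \<le> opnorm N A"
    unfolding opnorm_def by (intro cSUP_upper) (use w in \<open>auto simp: image_image\<close>)
  then show ?thesis using is_norm_nonneg[OF nrm, of "A *v w"] by linarith
qed

lemma jsr_nonneg:
  fixes N :: "real^'n \<Rightarrow> real"
  assumes nrm: "is_norm N" and fin: "finite \<A>" and ne: "\<A> \<noteq> {}"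
  shows "0 \<le> jsr N \<A>"
proof -
  have "0 \<le> setnorm N \<A> k" for k
  proof -
    obtain A where "A \<in> \<A>" using ne by blast
    then have "matprod (replicate k A) \<in> prods \<A> k" unfolding prods_def by force
    moreover have "finite (prods \<A> k)"
    proof -
      have "prods \<A> k \<subseteq> matprod ` {ws. set ws \<subseteq> \<A> \<and> length ws \<le> k}" unfolding prods_def by auto
      then show ?thesis using finite_lists_length_le[OF fin] finite_subset by blast
    qed
    ultimately show ?thesis unfolding setnorm_def
      using opnorm_nonneg[OF nrm] by (meson Max_ge dual_order.trans finite_imageI imageI)
  qed
  then have "ereal 0 \<le> limsup (\<lambda>k. ereal (root k (setnorm N \<A> k)))"
    by (intro le_Limsup) (auto simp: real_root_ge_zero)
  then show ?thesis unfolding jsr_def using real_of_ereal_pos zero_ereal_def by metis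
qed

text \<open>If every unit direction u is met by some v \<in> V with |v \<bullet> u| \<ge> s, then the symmetric
  polytope conv (V \<union> -V) contains the Euclidean ball of radius s (by separation).\<close>
lemma symmetric_hull_contains_cball:
  fixes V :: "'a::euclidean_space set"
  assumes fin: "finite V" and transversal: "\<And>u. norm u = 1 \<Longrightarrow> \<exists>v\<in>V. s \<le> \<bar>v \<bullet> u\<bar>"
  shows "cball 0 s \<subseteq> convex hull (V \<union> uminus ` V)"
proof
  fix y :: 'a assume y: "y \<in> cball 0 s"
  define C where "C = convex hull (V \<union> uminus ` V)"
  show "y \<in> C"
  proof (rule ccontr)
    assume "y \<notin> C"
    moreover have "closed C"
      unfolding C_def using fin by (intro compact_imp_closed finite_imp_compact_convex_hull) auto
    ultimately obtain a b where sep: "a \<bullet> y < b" "\<And>z. z \<in> C \<Longrightarrow> b < a \<bullet> z"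
      using separating_hyperplane_closed_point[of C y] unfolding C_def by auto
    have small: "\<bar>v \<bullet> a\<bar> < - b" if "v \<in> V" for v
    proof -
      have "v \<in> C" "- v \<in> C" unfolding C_def using that by (auto intro: hull_inc)
      then show ?thesis using sep(2)[of v] sep(2)[of "- v"] by (auto simp: inner_commute)
    qed
    obtain e :: 'a where "norm e = 1" using vector_choose_size[of 1] by auto
    then obtain v0 where "v0 \<in> V" using transversal by blast
    then have "a \<noteq> 0" using small[of v0] sep(1) by auto
    then obtain v where v: "v \<in> V" "s \<le> \<bar>v \<bullet> ((1 / norm a) *\<^sub>R a)\<bar>"
      using transversal[of "(1 / norm a) *\<^sub>R a"] by auto
    have "- b < norm a * norm y"
      using sep(1) Cauchy_Schwarz_ineq2[of a y] by (simp add: abs_le_iff)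
    also have "\<dots> \<le> norm a * s" using y by (simp add: mult_left_mono)
    also have "\<dots> \<le> \<bar>v \<bullet> a\<bar>" using v(2) \<open>a \<noteq> 0\<close> by (simp add: abs_mult field_simps)
    finally show False using small[OF v(1)] by linarith
  qed
qed

lemma convex_hull_max_at_generator:
  assumes "finite K" "convex_on UNIV f" "v \<in> convex hull K"
  shows "\<exists>k\<in>K. f v \<le> f k"
proof -
  have "K \<noteq> {}" using assms(3) by auto
  have "\<forall>z\<in>convex hull K. f z \<le> Max (f ` K)"
    using assms(1) by (intro convex_on_convex_hull_bound convex_on_subset[OF assms(2)]) auto
  moreover have "Max (f ` K) \<in> f ` K" using assms(1) \<open>K \<noteq> {}\<close> by simp
  ultimately show ?thesis using assms(3) by force
qed

lemma is_norm_convex_linear: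
  assumes nrm: "is_norm N"
  shows "convex_on UNIV (\<lambda>z. N (P *v z))"
proof (rule convex_onI)
  fix t :: real and x y assume t: "0 < t" "t < 1"
  have "N (P *v ((1 - t) *\<^sub>R x + t *\<^sub>R y)) = N ((1 - t) *\<^sub>R (P *v x) + t *\<^sub>R (P *v y))"
    by (simp add: matrix_vector_right_distrib matrix_vector_mult_scaleR)
  also have "\<dots> \<le> (1 - t) * N (P *v x) + t * N (P *v y)"
    using is_norm_triangle[OF nrm] is_norm_scaleR[OF nrm] t by (smt (verit))
  finally show "N (P *v ((1 - t) *\<^sub>R x + t *\<^sub>R y)) \<le> (1 - t) * N (P *v x) + t * N (P *v y)" .
qed simp

lemma closed_contains_limit_ball:
  assumes nrm: "is_norm N" and C: "closed C" and r: "0 < r"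
    and balls: "\<And>t. 0 \<le> t \<Longrightarrow> t < r \<Longrightarrow> {y. N y \<le> t} \<subseteq> C"
  shows "{y. N y \<le> r} \<subseteq> C"
proof
  fix y assume y: "y \<in> {y. N y \<le> r}"
  define f where "f k = (1 - 1 / (real k + 2)) *\<^sub>R y" for k :: nat
  have "f k \<in> C" for k
  proof -
    have c: "0 < 1 - 1 / (real k + 2)" "1 - 1 / (real k + 2) < 1" by (auto simp: field_simps)
    have "N (f k) = (1 - 1 / (real k + 2)) * N y"
      unfolding f_def using is_norm_scaleR[OF nrm] c by simp
    also have "\<dots> \<le> (1 - 1 / (real k + 2)) * r" using y c by (intro mult_left_mono) auto
    also have "\<dots> < r" using r c by simp
    finally show ?thesis using balls[of "N (f k)"] is_norm_nonneg[OF nrm] by blast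
  qed
  moreover have "(\<lambda>k. 1 - 1 / (real k + 2)) \<longlonglongrightarrow> 1" by real_asymp
  then have "f \<longlonglongrightarrow> 1 *\<^sub>R y" unfolding f_def by (intro tendsto_scaleR tendsto_const)
  ultimately show "y \<in> C" using closed_sequentially[OF C] by auto
qed

section \<open>Orbits and their symmetric hulls\<close>

definition words :: "'a set \<Rightarrow> nat \<Rightarrow> 'a list set" where
  "words \<A> k = {ws. set ws \<subseteq> \<A> \<and> length ws \<le> k}"

text \<open>The polytope H(x) = conv (A_p(x) \<union> A_p(-x)) whose inradius enters \<chi>_p.\<close>
definition sym_hull :: "(real^'n^'n) set \<Rightarrow> nat \<Rightarrow> real^'n \<Rightarrow> (real^'n) set" where
  "sym_hull \<A> p x = convex hull (orbit_p \<A> p x \<union> orbit_p \<A> p (- x))"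

lemma orbit_p_words: "orbit_p \<A> p x = (\<lambda>ws. matprod ws *v x) ` words \<A> p"
  unfolding orbit_p_def prods_def words_def by auto

lemma finite_orbit_p: "finite \<A> \<Longrightarrow> finite (orbit_p \<A> p x)"
  unfolding orbit_p_words words_def by (intro finite_imageI finite_lists_length_le)

lemma orbit_p_uminus: "orbit_p \<A> p (- x) = uminus ` orbit_p \<A> p x"
  unfolding orbit_p_words by (auto simp: image_image vec.neg)

lemma self_in_orbit_p: "x \<in> orbit_p \<A> p x"
  unfolding orbit_p_words words_def by (rule image_eqI[of _ _ "[]"]) auto

lemma sym_hull_compact: "finite \<A> \<Longrightarrow> compact (sym_hull \<A> p x)"
  unfolding sym_hull_def by (intro finite_imp_compact_convex_hull) (simp add: finite_orbit_p)

lemma matprod_append: "matprod (ws @ gs) = matprod ws ** matprod gs"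
  by (induction ws) (simp_all add: matrix_mul_assoc matrix_mul_lid)

lemma orbit_p_dim_grows:
  fixes \<A> :: "(real^'n^'n) set"
  assumes irr: "irreducible_set \<A>" and x: "x \<noteq> 0"
  shows "span (orbit_p \<A> k x) = UNIV \<or> k + 1 \<le> dim (orbit_p \<A> k x)"
proof (induction k)
  case 0
  have "orbit_p \<A> 0 x = {x}" unfolding orbit_p_words words_def by auto
  then show ?case using x by simp
next
  case (Suc k)
  define V where "V k = span (orbit_p \<A> k x)" for k
  have mono: "V k \<subseteq> V (Suc k)" unfolding V_def orbit_p_def by (intro span_mono) (blast intro: le_SucI)
  show ?case
  proof (cases "V (Suc k) = V k")
    case True
    have "(\<lambda>y. A *v y) ` V k \<subseteq> V k" if A: "A \<in> \<A>" for A
    proof -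
      have "(\<lambda>y. A *v y) ` V k = span ((\<lambda>y. A *v y) ` orbit_p \<A> k x)"
        unfolding V_def by (rule linear_span_image[symmetric]) (simp add: matrix_vector_mul_linear)
      also have "\<dots> \<subseteq> V (Suc k)"
        unfolding V_def orbit_p_words words_def using A
        by (intro span_mono) (auto simp: image_image matrix_vector_mul_assoc
            intro!: rev_image_eqI[of "A # _"])
      finally show ?thesis using True by simp
    qed
    then have "V k = {0} \<or> V k = UNIV"
      using irr unfolding irreducible_set_def V_def by (simp add: subspace_span)
    then have "V k = UNIV" using x span_base[OF self_in_orbit_p, of x \<A> k] unfolding V_def by auto
    then show ?thesis using True unfolding V_def by simp
  next
    case False
    show ?thesis
    proof (cases "V k = UNIV")
      case True then show ?thesis using mono unfolding V_def by auto
    next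
      case notfull: False
      have "dim (orbit_p \<A> k x) < dim (orbit_p \<A> (Suc k) x)"
        using dim_psubset mono False unfolding V_def by blast
      then show ?thesis using Suc.IH notfull unfolding V_def by simp
    qed
  qed
qed

lemma orbit_p_spans:
  fixes \<A> :: "(real^'n^'n) set"
  assumes irr: "irreducible_set \<A>" and x: "x \<noteq> 0" and hp: "CARD('n) - 1 \<le> p"
  shows "span (orbit_p \<A> p x) = UNIV"
proof -
  have "dim (orbit_p \<A> p x) \<le> DIM(real^'n)" by (rule dim_subset_UNIV)
  moreover have "1 \<le> CARD('n)" by (simp add: Suc_leI)
  ultimately have "span (orbit_p \<A> p x) = UNIV \<or> dim (orbit_p \<A> p x) = DIM(real^'n)"
    using orbit_p_dim_grows[OF irr x, of p] hp by auto
  then show ?thesis using dim_eq_full by blast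
qed

text \<open>By compactness the spanning property is uniform: every unit direction u has
  inner product at least s > 0 in absolute value with some element of A_p(x).\<close>
lemma orbit_p_uniformly_transversal:
  fixes \<A> :: "(real^'n^'n) set" and N :: "real^'n \<Rightarrow> real"
  assumes fin: "finite \<A>" and irr: "irreducible_set \<A>" and nrm: "is_norm N"
    and hp: "CARD('n) - 1 \<le> p"
  obtains s where "0 < s" "\<And>x u. N x = 1 \<Longrightarrow> norm u = 1 \<Longrightarrow> \<exists>v\<in>orbit_p \<A> p x. s \<le> \<bar>v \<bullet> u\<bar>"
proof -
  define W where "W = words \<A> p"
  have finW: "finite W" unfolding W_def words_def by (rule finite_lists_length_le[OF fin])
  have "[] \<in> W" unfolding W_def words_def by simp
  then have cardW: "0 < card W" using finW card_gt_0_iff[of W] by blast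
  define Q where "Q z = (\<Sum>ws\<in>W. \<bar>(matprod ws *v fst z) \<bullet> snd z\<bar>)" for z :: "(real^'n) \<times> (real^'n)"
  define T where "T = {x. N x = 1} \<times> sphere (0::real^'n) 1"
  have cT: "compact T"
    unfolding T_def by (intro compact_Times is_norm_unit_sphere_compact[OF nrm] compact_sphere)
  have Tne: "T \<noteq> {}"
  proof -
    obtain w where "N w = 1" using is_norm_unit_sphere_nonempty[OF nrm] by blast
    moreover obtain e :: "real^'n" where "norm e = 1" using vector_choose_size[of 1] by auto
    ultimately have "(w, e) \<in> T" unfolding T_def by simp
    then show ?thesis by blast
  qed
  have contQ: "continuous_on T Q" unfolding Q_def
    by (intro continuous_intros bounded_linear.continuous_on[OF matrix_vector_mul_bounded_linear])
  obtain z0 where z0: "z0 \<in> T" and z0min: "\<And>z. z \<in> T \<Longrightarrow> Q z0 \<le> Q z"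
    using continuous_attains_inf[OF cT Tne contQ] by blast
  have Qpos: "0 < Q z" if z: "z \<in> T" for z
  proof (rule ccontr)
    assume "\<not> 0 < Q z"
    moreover have "0 \<le> Q z" unfolding Q_def by (simp add: sum_nonneg)
    ultimately have "Q z = 0" by simp
    then have "\<forall>ws\<in>W. (matprod ws *v fst z) \<bullet> snd z = 0"
      using sum_nonneg_eq_0_iff[OF finW, of "\<lambda>ws. \<bar>(matprod ws *v fst z) \<bullet> snd z\<bar>"]
      unfolding Q_def by simp
    then have "orbit_p \<A> p (fst z) \<subseteq> {y. y \<bullet> snd z = 0}" unfolding orbit_p_words W_def by auto
    then have "span (orbit_p \<A> p (fst z)) \<subseteq> {y. y \<bullet> snd z = 0}"
      by (intro span_minimal subspace_hyperplane2)
    moreover have "fst z \<noteq> 0" using z is_norm_eq_0[OF nrm, of 0] unfolding T_def by auto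
    then have "snd z \<in> span (orbit_p \<A> p (fst z))" using orbit_p_spans[OF irr _ hp] by simp
    ultimately have "snd z \<bullet> snd z = 0" by blast
    then show False using z unfolding T_def by (auto simp: mem_Times_iff)
  qed
  show thesis
  proof (rule that)
    show "0 < Q z0 / card W" using Qpos[OF z0] cardW by simp
    fix x u :: "real^'n" assume xu: "N x = 1" "norm u = 1"
    show "\<exists>v\<in>orbit_p \<A> p x. Q z0 / card W \<le> \<bar>v \<bullet> u\<bar>"
    proof (rule ccontr)
      assume "\<not> ?thesis"
      then have "\<bar>(matprod ws *v x) \<bullet> u\<bar> < Q z0 / card W" if "ws \<in> W" for ws
        using that unfolding orbit_p_words W_def by auto
      then have "Q (x, u) < card W * (Q z0 / card W)"
        unfolding Q_def using cardW by (intro sum_bounded_above_strict) auto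
      then show False using z0min[of "(x, u)"] xu cardW unfolding T_def by simp
    qed
  qed
qed

lemma uniform_ball_in_sym_hull:
  fixes \<A> :: "(real^'n^'n) set" and N :: "real^'n \<Rightarrow> real"
  assumes fin: "finite \<A>" and irr: "irreducible_set \<A>" and nrm: "is_norm N"
    and hp: "CARD('n) - 1 \<le> p"
  obtains \<delta> where "0 < \<delta>" "\<And>x. N x = 1 \<Longrightarrow> {y. N y \<le> \<delta>} \<subseteq> sym_hull \<A> p x"
proof -
  obtain m where m: "0 < m" "\<And>x. m * norm x \<le> N x" using is_norm_lower_bound[OF nrm] by blast
  obtain s where s: "0 < s" "\<And>x u. N x = 1 \<Longrightarrow> norm u = 1 \<Longrightarrow> \<exists>v\<in>orbit_p \<A> p x. s \<le> \<bar>v \<bullet> u\<bar>"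
    using orbit_p_uniformly_transversal[OF fin irr nrm hp] by blast
  show thesis
  proof (rule that)
    show "0 < m * s" using m s by simp
    fix x assume x: "N x = 1"
    have "{y. N y \<le> m * s} \<subseteq> cball 0 s"
    proof
      fix y assume "y \<in> {y. N y \<le> m * s}"
      then have "m * norm y \<le> m * s" using m(2)[of y] by simp
      then show "y \<in> cball 0 s" using m(1) by simp
    qed
    also have "\<dots> \<subseteq> sym_hull \<A> p x"
      unfolding sym_hull_def orbit_p_uminus
      by (intro symmetric_hull_contains_cball finite_orbit_p fin s(2)[OF x])
    finally show "{y. N y \<le> m * s} \<subseteq> sym_hull \<A> p x" .
  qed
qed

section \<open>The measure of irreducibility\<close>

definition inradius :: "(real^'n \<Rightarrow> real) \<Rightarrow> (real^'n^'n) set \<Rightarrow> nat \<Rightarrow> real^'n \<Rightarrow> real" where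
  "inradius N \<A> p x = Sup {t. 0 \<le> t \<and> {y. N y \<le> t} \<subseteq> sym_hull \<A> p x}"

lemma chi_eq_inf_inradius: "chi N \<A> p = (INF x\<in>{x. N x = 1}. inradius N \<A> p x)"
  unfolding chi_def inradius_def sym_hull_def by (simp add: conj_commute)

lemma inradius_ball:
  fixes \<A> :: "(real^'n^'n) set" and N :: "real^'n \<Rightarrow> real"
  assumes fin: "finite \<A>" and nrm: "is_norm N" and x: "N x = 1"
    and \<delta>: "0 < \<delta>" "{y. N y \<le> \<delta>} \<subseteq> sym_hull \<A> p x"
  shows "\<delta> \<le> inradius N \<A> p x" "{y. N y \<le> inradius N \<A> p x} \<subseteq> sym_hull \<A> p x"
proof -
  define R where "R = {t. 0 \<le> t \<and> {y. N y \<le> t} \<subseteq> sym_hull \<A> p x}"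
  have "compact (N ` sym_hull \<A> p x)"
    by (intro compact_continuous_image is_norm_continuous[OF nrm] sym_hull_compact[OF fin])
  then obtain B where B: "\<And>z. z \<in> sym_hull \<A> p x \<Longrightarrow> N z \<le> B"
    using compact_imp_bounded bounded_imp_bdd_above unfolding bdd_above_def by fastforce
  have "t \<le> B" if "t \<in> R" for t
  proof -
    have "N (t *\<^sub>R x) = t" using that x is_norm_scaleR[OF nrm] unfolding R_def by simp
    then have "t *\<^sub>R x \<in> sym_hull \<A> p x" using that unfolding R_def by auto
    then show ?thesis using B[of "t *\<^sub>R x"] \<open>N (t *\<^sub>R x) = t\<close> by simp
  qed
  then have bdd: "bdd_above R" by (rule bdd_aboveI)
  have "\<delta> \<in> R" unfolding R_def using \<delta> by simp
  then show le: "\<delta> \<le> inradius N \<A> p x"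
    unfolding inradius_def R_def[symmetric] using bdd by (rule cSup_upper)
  show "{y. N y \<le> inradius N \<A> p x} \<subseteq> sym_hull \<A> p x"
  proof (rule closed_contains_limit_ball[OF nrm])
    show "closed (sym_hull \<A> p x)" using sym_hull_compact[OF fin] compact_imp_closed by blast
    show "0 < inradius N \<A> p x" using le \<delta> by linarith
    fix t assume t: "0 \<le> t" "t < inradius N \<A> p x"
    then obtain t' where "t' \<in> R" "t < t'"
      using less_cSup_iff[of R t] \<open>\<delta> \<in> R\<close> bdd unfolding inradius_def R_def[symmetric] by blast
    then show "{y. N y \<le> t} \<subseteq> sym_hull \<A> p x" unfolding R_def by auto
  qed
qed

lemma chi_ball_in_sym_hull:
  fixes \<A> :: "(real^'n^'n) set" and N :: "real^'n \<Rightarrow> real"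
  assumes fin: "finite \<A>" and irr: "irreducible_set \<A>" and nrm: "is_norm N"
    and hp: "CARD('n) - 1 \<le> p"
  shows "0 < chi N \<A> p" "\<And>x. N x = 1 \<Longrightarrow> {y. N y \<le> chi N \<A> p} \<subseteq> sym_hull \<A> p x"
proof -
  obtain \<delta> where \<delta>: "0 < \<delta>" and ball: "\<And>x. N x = 1 \<Longrightarrow> {y. N y \<le> \<delta>} \<subseteq> sym_hull \<A> p x"
    using uniform_ball_in_sym_hull[OF fin irr nrm hp] by blast
  have lower: "\<delta> \<le> inradius N \<A> p x" if "N x = 1" for x
    using inradius_ball(1)[OF fin nrm that \<delta> ball[OF that]] .
  have "\<delta> \<le> chi N \<A> p" unfolding chi_eq_inf_inradius
    using is_norm_unit_sphere_nonempty[OF nrm] lower by (intro cINF_greatest) auto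
  then show "0 < chi N \<A> p" using \<delta> by linarith
  fix x assume x: "N x = 1"
  have "chi N \<A> p \<le> inradius N \<A> p x" unfolding chi_eq_inf_inradius
    using x lower by (intro cINF_lower bdd_belowI2) auto
  then show "{y. N y \<le> chi N \<A> p} \<subseteq> sym_hull \<A> p x"
    using inradius_ball(2)[OF fin nrm x \<delta> ball[OF x]] by auto
qed

section \<open>The growth estimate\<close>

lemma sym_hull_max_at_orbit:
  assumes fin: "finite \<A>" and nrm: "is_norm N" and v: "v \<in> sym_hull \<A> p x"
  shows "\<exists>gs\<in>words \<A> p. N (P *v v) \<le> N (P *v (matprod gs *v x))"
proof -
  obtain k where k: "k \<in> orbit_p \<A> p x \<union> orbit_p \<A> p (- x)" "N (P *v v) \<le> N (P *v k)"
    using convex_hull_max_at_generator[OF _ is_norm_convex_linear[OF nrm] v[unfolded sym_hull_def]]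
      finite_orbit_p[OF fin] by blast
  then show ?thesis
    unfolding orbit_p_uminus orbit_p_words using is_norm_minus[OF nrm] by (auto simp: vec.neg)
qed

lemma growth_rate_bound:
  fixes \<mu> \<rho> :: real
  assumes "1 < \<mu>" "0 \<le> \<rho>" "j \<le> p" "1 \<le> n"
  shows "(\<mu> powr (1 / real (n + p)) * \<rho>) ^ (n + j) \<le> \<mu> * max 1 (\<rho> ^ p) * \<rho> ^ n"
proof -
  have "(\<mu> powr (1 / real (n + p))) ^ (n + j) = \<mu> powr (real (n + j) / real (n + p))"
    using assms by (simp add: powr_power)
  then have "(\<mu> powr (1 / real (n + p)) * \<rho>) ^ (n + j) = \<mu> powr (real (n + j) / real (n + p)) * (\<rho> ^ j * \<rho> ^ n)"
    by (simp add: power_mult_distrib power_add)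
  also have "\<dots> \<le> \<mu> * (max 1 (\<rho> ^ p) * \<rho> ^ n)"
  proof (rule mult_mono)
    have "\<mu> powr (real (n + j) / real (n + p)) \<le> \<mu> powr 1"
      using assms by (intro powr_mono) auto
    then show "\<mu> powr (real (n + j) / real (n + p)) \<le> \<mu>" using assms by simp
    have "\<rho> ^ j \<le> max 1 (\<rho> ^ p)"
      using assms power_le_one[of \<rho> j] power_increasing[of j p \<rho>]
      by (cases "\<rho> \<le> 1") (auto simp: le_max_iff_disj)
    then show "\<rho> ^ j * \<rho> ^ n \<le> max 1 (\<rho> ^ p) * \<rho> ^ n" using assms by (simp add: mult_right_mono)
  qed (use assms in auto)
  finally show ?thesis by (simp add: mult.assoc)
qed

lemma unit_vector_growth:
  fixes \<A> :: "(real^'n^'n) set" and N :: "real^'n \<Rightarrow> real"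
  assumes fin: "finite \<A>" and irr: "irreducible_set \<A>" and nrm: "is_norm N"
    and hp: "CARD('n) - 1 \<le> p" and xs: "xs \<noteq> 0"
    and hx: "\<mu> * eta_p N \<A> p * jsr N \<A> ^ n * N xs \<le> N (matprod ws *v xs)"
    and x1: "N x1 = 1"
  shows "\<exists>gs\<in>words \<A> p. \<mu> * max 1 (jsr N \<A> ^ p) * jsr N \<A> ^ n \<le> N (matprod ws *v (matprod gs *v x1))"
proof -
  define c where "c = chi N \<A> p"
  have c: "0 < c" unfolding c_def using chi_ball_in_sym_hull[OF fin irr nrm hp] by blast
  have Nxs: "0 < N xs" using is_norm_pos[OF nrm xs] .
  define v where "v = (c / N xs) *\<^sub>R xs"
  have "N v = c" unfolding v_def using is_norm_scaleR[OF nrm] Nxs c by simp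
  then have "v \<in> sym_hull \<A> p x1"
    using chi_ball_in_sym_hull(2)[OF fin irr nrm hp x1] unfolding c_def by auto
  then obtain gs where gs: "gs \<in> words \<A> p" "N (matprod ws *v v) \<le> N (matprod ws *v (matprod gs *v x1))"
    using sym_hull_max_at_orbit[OF fin nrm] by blast
  have "\<mu> * max 1 (jsr N \<A> ^ p) * jsr N \<A> ^ n = c / N xs * (\<mu> * eta_p N \<A> p * jsr N \<A> ^ n * N xs)"
    unfolding eta_p_def c_def[symmetric] using c Nxs by (simp add: field_simps)
  also have "\<dots> \<le> c / N xs * N (matprod ws *v xs)" using hx c Nxs by (intro mult_left_mono) auto
  also have "\<dots> = N (matprod ws *v v)"
    unfolding v_def using is_norm_scaleR[OF nrm] c Nxs by (simp add: matrix_vector_mult_scaleR)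
  finally show ?thesis using gs by (meson order_trans)
qed

theorem lemma3:
  fixes \<A> :: "(real^'n^'n) set" and N :: "real^'n \<Rightarrow> real"
    and p n :: nat and \<mu> :: real
  assumes fin: "finite \<A>" and ne: "\<A> \<noteq> {}"
    and irr: "irreducible_set \<A>"
    and nrm: "is_norm N"
    and hp: "p \<ge> CARD('n) - 1" and hn: "n \<ge> 1" and hmu: "\<mu> > 1"
    and hyp: "\<exists>ws xs. set ws \<subseteq> \<A> \<and> length ws = n \<and> xs \<noteq> 0 \<and>
               N (matprod ws *v xs) \<ge> \<mu> * eta_p N \<A> p * jsr N \<A> ^ n * N xs"
  shows "\<forall>x. x \<noteq> 0 \<longrightarrow> (\<exists>F. set F \<subseteq> \<A> \<and> n \<le> length F \<and> length F \<le> n + p \<and>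
            N (matprod F *v x) \<ge> (\<mu> powr (1 / real (n + p)) * jsr N \<A>) ^ length F * N x)"
proof (intro allI impI)
  fix x :: "real^'n" assume x: "x \<noteq> 0"
  obtain ws xs where ws: "set ws \<subseteq> \<A>" "length ws = n" and xs: "xs \<noteq> 0"
    and hx: "\<mu> * eta_p N \<A> p * jsr N \<A> ^ n * N xs \<le> N (matprod ws *v xs)" using hyp by blast
  define x1 where "x1 = (1 / N x) *\<^sub>R x"
  obtain gs where gs: "set gs \<subseteq> \<A>" "length gs \<le> p"
    and grow: "\<mu> * max 1 (jsr N \<A> ^ p) * jsr N \<A> ^ n \<le> N (matprod ws *v (matprod gs *v x1))"
    using unit_vector_growth[OF fin irr nrm hp xs hx is_norm_normalize[OF nrm x]]
    unfolding x1_def words_def by blast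
  have Nx: "0 < N x" using is_norm_pos[OF nrm x] .
  have "N (matprod (ws @ gs) *v x) = N x * N (matprod ws *v (matprod gs *v x1))"
    unfolding x1_def using Nx is_norm_scaleR[OF nrm]
    by (simp add: matprod_append matrix_vector_mul_assoc matrix_vector_mult_scaleR)
  moreover have "(\<mu> powr (1 / real (n + p)) * jsr N \<A>) ^ length (ws @ gs)
      \<le> \<mu> * max 1 (jsr N \<A> ^ p) * jsr N \<A> ^ n"
    using growth_rate_bound[OF hmu jsr_nonneg[OF nrm fin ne] gs(2) hn] ws by simp
  ultimately show "\<exists>F. set F \<subseteq> \<A> \<and> n \<le> length F \<and> length F \<le> n + p \<and>
      N (matprod F *v x) \<ge> (\<mu> powr (1 / real (n + p)) * jsr N \<A>) ^ length F * N x"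
    using ws gs grow Nx by (intro exI[of _ "ws @ gs"]) (auto simp: mult.commute intro: mult_right_mono order_trans)
qed

end
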